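(* Let $M,N\geq 2$ and let $\rho=\sum_{k=1}^n p_k|a^k\rangle\langle a^k|\otimes|b^k\rangle\langle b^k|$ be a classically correlated state on $\mathbb{C}^M\otimes\mathbb{C}^N$ (with $n>1$, $p_k\geq0$, $\sum_kp_k=1$, and unit vectors $|a^k\rangle\in\mathbb{C}^M$, $|b^k\rangle\in\mathbb{C}^N$). Then $$d_{\max}(\rho)\leq\sqrt{\frac{2(M-1)(N-1)}{MN}}.$$
   Context: For a state $\rho$ on $\mathbb{C}^M\otimes\mathbb{C}^N$ let $\rho_B=\mathrm{Tr}_A(\rho)$. A unitary $U^B$ on $\mathbb{C}^N$ is called cyclic for $\rho$ if $[\rho_B,U^B]=0$. Set $\rho_f=(I\otimes U^B)\rho(I\otimes U^{B\dagger})$ and define the Fu distance $d(\rho,U^B)=\frac{1}{\sqrt2}\|\rho-\rho_f\|_F$ (Frobenius norm $\|X\|_F=\sqrt{\mathrm{Tr}(X^\dagger X)}$). Define $d_{\max}(\rho)=\max\{d(\rho,U^B): U^B\text{ unitary},\ [\rho_B,U^B]=0\}$. *)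

theory Defs
  imports "HOL-Analysis.Analysis"
begin

text \<open>Square complex matrices indexed by a finite type; C^M (x) C^N is indexed by 'm \<times> 'n.\<close>

definition cadj :: "complex^'a^'a \<Rightarrow> complex^'a^'a" where
  "cadj A = (\<chi> i j. cnj (A $ j $ i))"

definition unitary_mat :: "complex^'a^'a \<Rightarrow> bool" where
  "unitary_mat U \<longleftrightarrow> U ** cadj U = mat 1 \<and> cadj U ** U = mat 1"

definition outer :: "complex^'a \<Rightarrow> complex^'a^'a" where
  "outer a = (\<chi> i j. a $ i * cnj (a $ j))"

definition tensor :: "complex^'a^'a \<Rightarrow> complex^'b^'b \<Rightarrow> complex^('a \<times> 'b)^('a \<times> 'b)" where
  "tensor A B = (\<chi> p q. A $ fst p $ fst q * B $ snd p $ snd q)"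

definition ptraceA :: "complex^('a::finite \<times> 'b)^('a \<times> 'b) \<Rightarrow> complex^'b^'b" where
  "ptraceA \<rho> = (\<chi> j j'. \<Sum>i\<in>UNIV. \<rho> $ (i, j) $ (i, j'))"

definition frob :: "complex^'a::finite^'a \<Rightarrow> real" where
  "frob X = sqrt (\<Sum>i\<in>UNIV. \<Sum>j\<in>UNIV. (cmod (X $ i $ j))\<^sup>2)"

definition fu_dist :: "complex^('a::finite \<times> 'b::finite)^('a \<times> 'b) \<Rightarrow> complex^'b^'b \<Rightarrow> real" where
  "fu_dist \<rho> U = (let \<rho>f = tensor (mat 1 :: complex^'a^'a) U ** \<rho> ** tensor (mat 1 :: complex^'a^'a) (cadj U)
                  in frob (\<rho> - \<rho>f) / sqrt 2)"

definition dmax :: "complex^('a::finite \<times> 'b::finite)^('a \<times> 'b) \<Rightarrow> real" where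
  "dmax \<rho> = Sup {fu_dist \<rho> U | U. unitary_mat U \<and> ptraceA \<rho> ** U = U ** ptraceA \<rho>}"

end

theory Submission
  imports Defs
begin

text \<open>
  Write \<open>A\<^sub>k = |a\<^sup>k\<rangle>\<langle>a\<^sup>k|\<close>, \<open>B\<^sub>k = |b\<^sup>k\<rangle>\<langle>b\<^sup>k|\<close> and \<open>B'\<^sub>k = U B\<^sub>k U\<^sup>\<dagger>\<close>, so that
  \<open>\<rho> - \<rho>\<^sub>f = \<Sum>\<^sub>k p\<^sub>k A\<^sub>k \<otimes> (B\<^sub>k - B'\<^sub>k)\<close>. Since \<open>U\<close> commutes with \<open>\<rho>\<^sub>B = \<Sum>\<^sub>k p\<^sub>k B\<^sub>k\<close>,
  also \<open>\<Sum>\<^sub>k p\<^sub>k B'\<^sub>k = \<rho>\<^sub>B\<close>, hence each \<open>A\<^sub>k\<close> may be replaced by \<open>A\<^sub>k - I/M\<close> without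
  changing the sum. The Frobenius norm is multiplicative on tensor products and
  \<open>\<parallel>|c\<rangle>\<langle>c| - I/d\<parallel> = \<surd>(1 - 1/d)\<close> for every unit vector \<open>c\<close> in dimension \<open>d\<close>; bounding
  \<open>\<parallel>B\<^sub>k - B'\<^sub>k\<parallel> \<le> \<parallel>B\<^sub>k - I/N\<parallel> + \<parallel>B'\<^sub>k - I/N\<parallel>\<close> gives
  \<open>\<parallel>\<rho> - \<rho>\<^sub>f\<parallel> \<le> 2 \<surd>((1 - 1/M)(1 - 1/N))\<close>.
\<close>

lemma norm_vec_power2: "(norm (x::'b::real_normed_vector^'a))\<^sup>2 = (\<Sum>i\<in>UNIV. (norm (x$i))\<^sup>2)"
  unfolding norm_vec_def L2_set_def by (simp add: sum_nonneg)

lemma frob_eq_norm: "frob X = norm X"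
  unfolding frob_def by (simp add: norm_vec_power2[symmetric])

lemma of_real_norm_power2_cvec:
  "complex_of_real ((norm (v::complex^'a))\<^sup>2) = (\<Sum>i\<in>UNIV. v$i * cnj (v$i))"
  unfolding norm_vec_power2 of_real_sum by (simp only: norm_vec_def complex_norm_square)

lemma sum_UNIV_prod:
  "(\<Sum>k\<in>(UNIV::('a::finite \<times> 'b::finite) set). f k) = (\<Sum>i\<in>UNIV. \<Sum>j\<in>UNIV. f (i, j))"
  by (simp add: UNIV_Times_UNIV[symmetric] sum.cartesian_product del: UNIV_Times_UNIV)

lemma matrix_add_rdistrib: "(B + C) ** A = B ** A + C ** (A::'a::semiring_1^'n^'m)"
  by (vector matrix_matrix_mult_def sum.distrib[symmetric] field_simps)

lemma linear_matrix_conj: "linear (\<lambda>X. P ** X ** (Q::'a::real_algebra_1^'n^'m))"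
  by (rule linearI)
    (simp_all add: matrix_add_ldistrib matrix_add_rdistrib scalar_matrix_assoc matrix_scalar_ac)

lemma cadj_mat_1: "cadj (mat 1) = mat 1"
  by (simp add: cadj_def mat_def vec_eq_iff)

lemma unitary_mat_1: "unitary_mat (mat 1)"
  unfolding unitary_mat_def cadj_mat_1 by simp

lemma unitary_mat_columns_orthonormal:
  assumes "unitary_mat U"
  shows "(\<Sum>i\<in>UNIV. cnj (U$i$l) * U$i$k) = (if l = k then 1 else 0)"
proof -
  have "(cadj U ** U) $ l $ k = mat 1 $ l $ k"
    using assms unfolding unitary_mat_def by simp
  then show ?thesis
    unfolding cadj_def matrix_matrix_mult_def mat_def by simp
qed

lemma norm_unitary_mult:
  assumes "unitary_mat U"
  shows "norm (U *v b) = norm b"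
proof -
  have "complex_of_real ((norm (U *v b))\<^sup>2)
      = (\<Sum>i\<in>UNIV. \<Sum>k\<in>UNIV. \<Sum>l\<in>UNIV. b$k * cnj (b$l) * (cnj (U$i$l) * U$i$k))"
    unfolding of_real_norm_power2_cvec matrix_vector_mult_def
    by (simp add: cnj_sum sum_product mult_ac)
  also have "\<dots> = (\<Sum>k\<in>UNIV. \<Sum>l\<in>UNIV. \<Sum>i\<in>UNIV. b$k * cnj (b$l) * (cnj (U$i$l) * U$i$k))"
    by (subst sum.swap) (rule sum.cong[OF refl], rule sum.swap)
  also have "\<dots> = (\<Sum>k\<in>UNIV. \<Sum>l\<in>UNIV. b$k * cnj (b$l) * (\<Sum>i\<in>UNIV. cnj (U$i$l) * U$i$k))"
    by (simp add: sum_distrib_left)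
  also have "\<dots> = (\<Sum>k\<in>UNIV. b$k * cnj (b$k))"
    by (simp add: unitary_mat_columns_orthonormal[OF assms] if_distrib cong: if_cong)
  also have "\<dots> = complex_of_real ((norm b)\<^sup>2)"
    by (rule of_real_norm_power2_cvec[symmetric])
  finally have "(norm (U *v b))\<^sup>2 = (norm b)\<^sup>2"
    by (simp only: of_real_eq_iff)
  then show ?thesis
    by (simp add: power2_eq_iff_nonneg)
qed

lemma outer_unitary_conj: "U ** outer b ** cadj U = outer (U *v b)"
  unfolding outer_def cadj_def matrix_matrix_mult_def matrix_vector_mult_def
  by (simp add: vec_eq_iff sum_distrib_left sum_distrib_right algebra_simps cnj_sum;
      subst sum.swap; simp add: sum_distrib_left sum_distrib_right algebra_simps)

lemma norm_outer_minus_scaled_id: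
  assumes "norm (c::complex^'a) = 1"
  shows "norm (outer c - (1 / real CARD('a)) *\<^sub>R mat 1) = sqrt (1 - 1 / real CARD('a))"
proof -
  define d where "d = real CARD('a)"
  define s where "s i = (cmod (c$i))\<^sup>2" for i
  have d_pos: "d > 0"
    unfolding d_def by simp
  have sum_s: "(\<Sum>i\<in>UNIV. s i) = 1"
    using assms norm_vec_power2[of c] unfolding s_def by simp
  then have sum_s_mult: "(\<Sum>i\<in>UNIV. s i * x) = x" for x
    by (simp add: sum_distrib_right[symmetric])
  have entry: "(cmod ((outer c - (1 / d) *\<^sub>R mat 1) $ i $ j))\<^sup>2
      = s i * s j - (if i = j then 2 * s i / d - 1 / d\<^sup>2 else 0)" for i j
  proof (cases "i = j")
    case True
    have "(outer c - (1 / d) *\<^sub>R mat 1) $ j $ j = c$j * cnj (c$j) - (1 / d) *\<^sub>R 1"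
      unfolding outer_def mat_def by simp
    also have "\<dots> = complex_of_real (s j - 1 / d)"
      unfolding s_def by (simp add: complex_norm_square scaleR_conv_of_real del: of_real_power)
    finally have "(cmod ((outer c - (1 / d) *\<^sub>R mat 1) $ j $ j))\<^sup>2 = (s j - 1 / d)\<^sup>2"
      by (simp only: norm_of_real power2_abs)
    with d_pos show ?thesis
      unfolding True by (simp add: power2_eq_square field_simps)
  next
    case False
    then show ?thesis
      unfolding outer_def mat_def s_def by (simp add: norm_mult power_mult_distrib)
  qed
  have "(norm (outer c - (1 / d) *\<^sub>R mat 1))\<^sup>2
      = (\<Sum>i\<in>UNIV. \<Sum>j\<in>UNIV. s i * s j) - (\<Sum>i\<in>UNIV. 2 * s i / d - 1 / d\<^sup>2)"
    unfolding norm_vec_power2 entry by (simp add: sum_subtractf sum.delta)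
  also have "\<dots> = 1 - 1 / d"
    using d_pos
    by (simp add: sum_product[symmetric] sum_s sum_s_mult sum_subtractf sum_divide_distrib[symmetric]
        sum_distrib_left[symmetric] d_def power2_eq_square field_simps)
  finally show ?thesis
    unfolding d_def by (simp add: real_sqrt_unique)
qed

lemma tensor_mult: "tensor A B ** tensor C D = tensor (A ** C) (B ** D)"
  unfolding tensor_def matrix_matrix_mult_def
  by (simp add: vec_eq_iff sum_UNIV_prod sum_product algebra_simps)

lemma norm_tensor: "norm (tensor A B) = norm A * norm B"
proof -
  have "(norm (tensor A B))\<^sup>2 = (norm A * norm B)\<^sup>2"
    unfolding power_mult_distrib norm_vec_power2 tensor_def
    by (simp add: sum_UNIV_prod sum_product norm_mult power_mult_distrib)
  then show ?thesis
    by (simp add: power2_eq_iff_nonneg)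
qed

interpretation tensor: bounded_bilinear tensor
proof
  show "tensor (A + A') B = tensor A B + tensor A' B"
    and "tensor A (B + B') = tensor A B + tensor A B'"
    and "tensor (r *\<^sub>R A) B = r *\<^sub>R tensor A B"
    and "tensor A (r *\<^sub>R B) = r *\<^sub>R tensor A B"
    for A A' :: "complex^'a^'a" and B B' :: "complex^'b^'b" and r
    by (simp_all add: tensor_def vec_eq_iff algebra_simps)
  show "\<exists>K. \<forall>A B. norm (tensor A B) \<le> norm A * norm B * K"
    by (rule exI[of _ 1]) (simp add: norm_tensor)
qed

lemma linear_ptraceA: "linear ptraceA"
  by (rule linearI) (simp_all add: ptraceA_def vec_eq_iff sum.distrib scaleR_sum_right)

lemma ptraceA_tensor_outer:
  assumes "norm a = 1"
  shows "ptraceA (tensor (outer a) B) = B"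
proof -
  have "(\<Sum>i\<in>UNIV. a$i * cnj (a$i)) = 1"
    using of_real_norm_power2_cvec[of a] assms by simp
  then show ?thesis
    unfolding ptraceA_def tensor_def outer_def
    by (simp add: vec_eq_iff sum_distrib_right[symmetric])
qed

lemma tensor_mixture_diff:
  assumes "(\<Sum>k\<in>K. w k *\<^sub>R B k) = (\<Sum>k\<in>K. w k *\<^sub>R B' k)"
  shows "(\<Sum>k\<in>K. w k *\<^sub>R tensor (A k) (B k)) - (\<Sum>k\<in>K. w k *\<^sub>R tensor (A k) (B' k))
    = (\<Sum>k\<in>K. w k *\<^sub>R tensor (A k - C) (B k - B' k))"
proof -
  have "tensor C (\<Sum>k\<in>K. w k *\<^sub>R (B k - B' k)) = 0"
    using assms by (simp add: scaleR_diff_right sum_subtractf tensor.zero_right)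
  then have cancel: "(\<Sum>k\<in>K. w k *\<^sub>R tensor C (B k - B' k)) = 0"
    by (simp add: tensor.sum_right tensor.scaleR_right)
  have "(\<Sum>k\<in>K. w k *\<^sub>R tensor (A k) (B k)) - (\<Sum>k\<in>K. w k *\<^sub>R tensor (A k) (B' k))
      = (\<Sum>k\<in>K. w k *\<^sub>R tensor (A k) (B k - B' k))"
    by (simp add: tensor.diff_right scaleR_diff_right sum_subtractf)
  also have "\<dots> = (\<Sum>k\<in>K. w k *\<^sub>R tensor (A k - C) (B k - B' k))
      + (\<Sum>k\<in>K. w k *\<^sub>R tensor C (B k - B' k))"
    by (simp add: tensor.diff_left scaleR_diff_right sum_subtractf)
  finally show ?thesis
    by (simp add: cancel)
qed

lemma norm_sum_scaleR_le:
  assumes "\<forall>k\<in>K. w k \<ge> 0" and "\<forall>k\<in>K. norm (X k) \<le> s"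
  shows "norm (\<Sum>k\<in>K. w k *\<^sub>R X k) \<le> (\<Sum>k\<in>K. w k) * s"
proof -
  have "norm (\<Sum>k\<in>K. w k *\<^sub>R X k) \<le> (\<Sum>k\<in>K. norm (w k *\<^sub>R X k))"
    by (rule norm_sum)
  also have "\<dots> \<le> (\<Sum>k\<in>K. w k * s)"
    using assms by (intro sum_mono) (simp add: mult_left_mono)
  finally show ?thesis
    by (simp add: sum_distrib_right)
qed

lemma fu_dist_classically_correlated_le:
  fixes a :: "nat \<Rightarrow> complex^'m::finite" and b :: "nat \<Rightarrow> complex^'n::finite"
  assumes p_nonneg: "\<forall>k\<in>K. p k \<ge> 0" and p_sum: "(\<Sum>k\<in>K. p k) = 1"
    and unit: "\<forall>k\<in>K. norm (a k) = 1 \<and> norm (b k) = 1"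
    and \<rho>: "\<rho> = (\<Sum>k\<in>K. p k *\<^sub>R tensor (outer (a k)) (outer (b k)))"
    and U: "unitary_mat U" and commute: "ptraceA \<rho> ** U = U ** ptraceA \<rho>"
  shows "fu_dist \<rho> U \<le> sqrt (2 * (1 - 1 / real CARD('m)) * (1 - 1 / real CARD('n)))"
proof -
  define \<rho>f where "\<rho>f = tensor (mat 1 :: complex^'m^'m) U ** \<rho> ** tensor (mat 1 :: complex^'m^'m) (cadj U)"
  define b' where "b' k = U *v b k" for k
  define CM where "CM = (1 / real CARD('m)) *\<^sub>R (mat 1 :: complex^'m^'m)"
  define CN where "CN = (1 / real CARD('n)) *\<^sub>R (mat 1 :: complex^'n^'n)"
  define s where "s = sqrt (1 - 1 / real CARD('m)) * sqrt (1 - 1 / real CARD('n))"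
  note conj_sum = linear_sum[OF linear_matrix_conj] and conj_scale = linear_scale[OF linear_matrix_conj]
  have \<rho>f_mixture: "\<rho>f = (\<Sum>k\<in>K. p k *\<^sub>R tensor (outer (a k)) (outer (b' k)))"
    unfolding \<rho>f_def \<rho> conj_sum o_def conj_scale
    by (simp add: tensor_mult outer_unitary_conj b'_def)
  have \<rho>_B: "ptraceA \<rho> = (\<Sum>k\<in>K. p k *\<^sub>R outer (b k))"
    unfolding \<rho> linear_sum[OF linear_ptraceA] o_def linear_scale[OF linear_ptraceA]
    using unit by (simp add: ptraceA_tensor_outer)
  have "(\<Sum>k\<in>K. p k *\<^sub>R outer (b' k)) = U ** ptraceA \<rho> ** cadj U"
    unfolding \<rho>_B conj_sum o_def conj_scale by (simp add: outer_unitary_conj b'_def)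
  also have "\<dots> = ptraceA \<rho> ** (U ** cadj U)"
    using commute by (simp add: matrix_mul_assoc)
  also have "\<dots> = (\<Sum>k\<in>K. p k *\<^sub>R outer (b k))"
    using U \<rho>_B unfolding unitary_mat_def by simp
  finally have marginal: "(\<Sum>k\<in>K. p k *\<^sub>R outer (b' k)) = (\<Sum>k\<in>K. p k *\<^sub>R outer (b k))" .
  have difference: "\<rho> - \<rho>f = (\<Sum>k\<in>K. p k *\<^sub>R tensor (outer (a k) - CM) (outer (b k) - outer (b' k)))"
    unfolding \<rho>f_mixture by (subst \<rho>) (rule tensor_mixture_diff[OF marginal[symmetric]])
  have term_le: "norm (tensor (outer (a k) - CM) (outer (b k) - outer (b' k))) \<le> 2 * s"
    if "k \<in> K" for k
  proof -
    have "norm (outer (b k) - outer (b' k)) \<le> norm (outer (b k) - CN) + norm (outer (b' k) - CN)"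
      using norm_triangle_ineq4[of "outer (b k) - CN" "outer (b' k) - CN"] by simp
    then have "norm (outer (b k) - outer (b' k)) \<le> 2 * sqrt (1 - 1 / real CARD('n))"
      using unit that norm_unitary_mult[OF U]
      by (simp add: CN_def b'_def norm_outer_minus_scaled_id)
    then have "norm (outer (a k) - CM) * norm (outer (b k) - outer (b' k))
        \<le> norm (outer (a k) - CM) * (2 * sqrt (1 - 1 / real CARD('n)))"
      by (rule mult_left_mono) simp
    also have "\<dots> = 2 * s"
      using unit that unfolding CM_def s_def by (simp add: norm_outer_minus_scaled_id)
    finally show ?thesis
      by (simp add: norm_tensor)
  qed
  have "norm (\<rho> - \<rho>f) \<le> 2 * s"
    using norm_sum_scaleR_le[OF p_nonneg, of "\<lambda>k. tensor (outer (a k) - CM) (outer (b k) - outer (b' k))"]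
      term_le p_sum
    unfolding difference by simp
  then have "fu_dist \<rho> U \<le> 2 * s / sqrt 2"
    unfolding fu_dist_def Let_def frob_eq_norm \<rho>f_def[symmetric] by (simp add: divide_right_mono)
  also have "\<dots> = sqrt 2 * s"
    using real_div_sqrt[of 2] by (simp add: times_divide_eq_left[symmetric] del: times_divide_eq_left)
  also have "\<dots> = sqrt (2 * (1 - 1 / real CARD('m)) * (1 - 1 / real CARD('n)))"
    unfolding s_def by (simp only: real_sqrt_mult mult.assoc)
  finally show ?thesis .
qed

theorem mainTheorem8:
  fixes n :: nat
    and p :: "nat \<Rightarrow> real"
    and a :: "nat \<Rightarrow> complex^'m::finite"
    and b :: "nat \<Rightarrow> complex^'n::finite"
    and \<rho> :: "complex^('m \<times> 'n)^('m \<times> 'n)"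
  assumes "CARD('m) \<ge> 2" and "CARD('n) \<ge> 2"
    and "n > 1"
    and "\<forall>k\<in>{1..n}. p k \<ge> 0"
    and "(\<Sum>k=1..n. p k) = 1"
    and "\<forall>k\<in>{1..n}. norm (a k) = 1 \<and> norm (b k) = 1"
    and "\<rho> = (\<Sum>k=1..n. p k *\<^sub>R tensor (outer (a k)) (outer (b k)))"
  shows "dmax \<rho> \<le> sqrt (2 * (real CARD('m) - 1) * (real CARD('n) - 1) / (real CARD('m) * real CARD('n)))"
proof -
  have "2 * (1 - 1 / real CARD('m)) * (1 - 1 / real CARD('n))
      = 2 * (real CARD('m) - 1) * (real CARD('n) - 1) / (real CARD('m) * real CARD('n))"
    by (simp add: field_simps)
  then have "fu_dist \<rho> U \<le> sqrt (2 * (real CARD('m) - 1) * (real CARD('n) - 1) / (real CARD('m) * real CARD('n)))"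
    if "unitary_mat U" and "ptraceA \<rho> ** U = U ** ptraceA \<rho>" for U
    using fu_dist_classically_correlated_le[of "{1..n}" p a b \<rho> U] assms(4-7) that by simp
  moreover have "fu_dist \<rho> (mat 1) \<in> {fu_dist \<rho> U | U. unitary_mat U \<and> ptraceA \<rho> ** U = U ** ptraceA \<rho>}"
    using unitary_mat_1 by auto
  ultimately show ?thesis
    unfolding dmax_def by (intro cSup_least) auto
qed

end
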